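(* For all $n\ge 1$, \[\left|\mathrm{Av}_n[\overline{123},\overline{321}]\right|=\begin{cases}1 & n=1,\\ 0 & n\ge 3 \text{ odd},\\ U_{n-1} & n\ge 2\text{ even},\end{cases}\] where $U_m$ is the number of up-down permutations of length $m$.
   Context: For $\sigma\in S_n$, the cyclic permutation $[\sigma]$ is the set of all rotations of $\sigma$; $[S_n]$ is the set of cyclic permutations of length $n$. A vincular pattern is a permutation $\pi\in S_k$ with some pairs of adjacent positions joined by an overline; a linear permutation $\tau$ contains it if $\tau$ has a subsequence order-isomorphic to $\pi$ whose entries corresponding to overlined adjacent positions are adjacent in $\tau$. $[\sigma]$ contains $[\pi]$ if some rotation of $\sigma$ contains $\pi$. $\mathrm{Av}_n[\overline{123},\overline{321}]$ is the set of $[\sigma]\in[S_n]$ avoiding both $[\overline{123}]$ and $[\overline{321}]$ (i.e. with no three cyclically consecutive entries increasing or decreasing). An up-down permutation of length $m$ is $\sigma\in S_m$ with $\sigma_1<\sigma_2>\sigma_3<\sigma_4>\cdots$. *)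

theory Defs
  imports Main
begin

definition perms :: "nat \<Rightarrow> nat list set" where
  "perms n = {xs. distinct xs \<and> set xs = {1..n}}"

definition cyc :: "nat list \<Rightarrow> nat list set" where
  "cyc \<sigma> = {rotate k \<sigma> | k. k < length \<sigma>}"

definition cyc_perms :: "nat \<Rightarrow> nat list set set" where
  "cyc_perms n = cyc ` perms n"

text \<open>A vincular pattern is a pattern pi (list, order pattern) together with a set A of
  positions i (0-based) such that positions i and i+1 of pi are joined by an overline.
  tau contains (pi, A) if there are positions idx_0 < ... < idx_{k-1} in tau whose entries are
  order-isomorphic to pi and idx_{i+1} = idx_i + 1 for every i in A.\<close>
definition vinc_contains :: "nat list \<Rightarrow> nat list \<Rightarrow> nat set \<Rightarrow> bool" where
  "vinc_contains \<tau> \<pi> A \<longleftrightarrow>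
     (\<exists>idx. length idx = length \<pi> \<and> sorted_wrt (<) idx \<and> (\<forall>j\<in>set idx. j < length \<tau>) \<and>
        (\<forall>i j. i < length \<pi> \<longrightarrow> j < length \<pi> \<longrightarrow>
            (\<tau> ! (idx ! i) < \<tau> ! (idx ! j) \<longleftrightarrow> \<pi> ! i < \<pi> ! j)) \<and>
        (\<forall>i\<in>A. i + 1 < length \<pi> \<longrightarrow> idx ! (i + 1) = idx ! i + 1))"

definition cyc_contains :: "nat list set \<Rightarrow> nat list \<Rightarrow> nat set \<Rightarrow> bool" where
  "cyc_contains C \<pi> A \<longleftrightarrow> (\<exists>\<tau>\<in>C. vinc_contains \<tau> \<pi> A)"

definition Av_123_321 :: "nat \<Rightarrow> nat list set set" where
  "Av_123_321 n = {C \<in> cyc_perms n.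
      \<not> cyc_contains C [1,2,3] {0,1} \<and> \<not> cyc_contains C [3,2,1] {0,1}}"

text \<open>Up-down permutations: sigma_1 < sigma_2 > sigma_3 < ... (1-based), i.e. with 0-based
  indices, ascent at even i and descent at odd i.\<close>
definition up_down :: "nat list \<Rightarrow> bool" where
  "up_down \<sigma> \<longleftrightarrow> (\<forall>i. i + 1 < length \<sigma> \<longrightarrow>
      (if even i then \<sigma> ! i < \<sigma> ! (i + 1) else \<sigma> ! i > \<sigma> ! (i + 1)))"

definition U :: "nat \<Rightarrow> nat" where
  "U m = card {\<sigma> \<in> perms m. up_down \<sigma>}"

end

theory Submission
  imports Defs
begin

text \<open>Both overlined patterns are fully consecutive, so a cyclic permutation avoids them exactly
  when no three cyclically consecutive entries are monotone, i.e. when its cyclic ascents and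
  descents alternate. Alternation around a cycle forces even length. For even n, rotate the
  maximum n to the last position: since its neighbours are smaller, the cycle alternates iff the
  remaining word of length n - 1 is up-down, and this representative ending in n is unique, which
  gives a bijection with up-down permutations of length n - 1.\<close>

lemma vinc_contains_consecutive:
  assumes adjacent: "{i. i + 1 < length \<pi>} \<subseteq> A"
  shows "vinc_contains \<tau> \<pi> A \<longleftrightarrow>
    (\<exists>s. s + length \<pi> \<le> length \<tau> \<and>
      (\<forall>a<length \<pi>. \<forall>b<length \<pi>. (\<tau> ! (s + a) < \<tau> ! (s + b) \<longleftrightarrow> \<pi> ! a < \<pi> ! b)))"
    (is "_ \<longleftrightarrow> (\<exists>s. ?factor s)")
proof
  assume "vinc_contains \<tau> \<pi> A"
  then obtain idx where len: "length idx = length \<pi>" and bound: "\<forall>j\<in>set idx. j < length \<tau>"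
    and iso: "\<forall>a<length \<pi>. \<forall>b<length \<pi>.
                (\<tau> ! (idx ! a) < \<tau> ! (idx ! b) \<longleftrightarrow> \<pi> ! a < \<pi> ! b)"
    and adj: "\<forall>i\<in>A. i + 1 < length \<pi> \<longrightarrow> idx ! (i + 1) = idx ! i + 1"
    unfolding vinc_contains_def by blast
  show "\<exists>s. ?factor s"
  proof (cases "\<pi> = []")
    case True
    then show ?thesis by auto
  next
    case False
    have consecutive: "idx ! a = idx ! 0 + a" if "a < length \<pi>" for a
      using that
    proof (induction a)
      case (Suc a)
      then show ?case using adj adjacent by auto
    qed simp
    have "idx ! (length \<pi> - 1) \<in> set idx"
      using len False by simp
    then have "idx ! 0 + length \<pi> \<le> length \<tau>"
      using bound consecutive[of "length \<pi> - 1"] False by fastforce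
    moreover have "\<tau> ! (idx ! 0 + a) < \<tau> ! (idx ! 0 + b) \<longleftrightarrow> \<pi> ! a < \<pi> ! b"
      if "a < length \<pi>" "b < length \<pi>" for a b
      using iso[rule_format, OF that] consecutive[OF that(1)] consecutive[OF that(2)] by simp
    ultimately show ?thesis by blast
  qed
next
  assume "\<exists>s. ?factor s"
  then obtain s where "?factor s" ..
  then show "vinc_contains \<tau> \<pi> A"
    unfolding vinc_contains_def
    by (intro exI[of _ "[s..<s + length \<pi>]"]) auto
qed

lemma cyc_contains_consecutive:
  assumes adjacent: "{i. i + 1 < length \<pi>} \<subseteq> A" and short: "length \<pi> \<le> length \<sigma>"
  shows "cyc_contains (cyc \<sigma>) \<pi> A \<longleftrightarrow>
    (\<exists>j<length \<sigma>. \<forall>a<length \<pi>. \<forall>b<length \<pi>.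
      (\<sigma> ! ((j + a) mod length \<sigma>) < \<sigma> ! ((j + b) mod length \<sigma>) \<longleftrightarrow> \<pi> ! a < \<pi> ! b))"
    (is "_ \<longleftrightarrow> (\<exists>j<length \<sigma>. ?factor j)")
proof
  let ?n = "length \<sigma>"
  assume "cyc_contains (cyc \<sigma>) \<pi> A"
  then obtain r s where "r < ?n" and s: "s + length \<pi> \<le> ?n"
    and iso: "\<forall>a<length \<pi>. \<forall>b<length \<pi>.
                (rotate r \<sigma> ! (s + a) < rotate r \<sigma> ! (s + b) \<longleftrightarrow> \<pi> ! a < \<pi> ! b)"
    unfolding cyc_contains_def cyc_def vinc_contains_consecutive[OF adjacent] by auto
  have shift: "rotate r \<sigma> ! (s + a) = \<sigma> ! (((r + s) mod ?n + a) mod ?n)" if "a < length \<pi>" for a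
    using that s by (simp add: nth_rotate mod_add_left_eq add.assoc)
  have "?factor ((r + s) mod ?n)"
    using iso shift by simp
  moreover have "(r + s) mod ?n < ?n"
    using \<open>r < ?n\<close> by (intro mod_less_divisor) linarith
  ultimately show "\<exists>j<?n. ?factor j" by blast
next
  assume "\<exists>j<length \<sigma>. ?factor j"
  then obtain j where "j < length \<sigma>" and "?factor j" by blast
  then have "rotate j \<sigma> \<in> cyc \<sigma>"
    unfolding cyc_def by auto
  moreover have "vinc_contains (rotate j \<sigma>) \<pi> A"
    unfolding vinc_contains_consecutive[OF adjacent]
    using short \<open>?factor j\<close> by (intro exI[of _ 0]) (simp add: nth_rotate)
  ultimately show "cyc_contains (cyc \<sigma>) \<pi> A"
    unfolding cyc_contains_def by blast
qed

lemma adjacent_positions_3: "{i. i + 1 < length [a, b, c]} \<subseteq> {0, 1::nat}"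
  by (auto simp: less_Suc_eq)

lemma all_less_3_iff: "(\<forall>a<3::nat. P a) \<longleftrightarrow> P 0 \<and> P 1 \<and> P 2"
  by (auto simp: numeral_3_eq_3 numeral_2_eq_2 All_less_Suc)

lemma order_isomorphic_123_iff:
  fixes f :: "nat \<Rightarrow> 'a::linorder"
  shows "(\<forall>a<3. \<forall>b<3. f a < f b \<longleftrightarrow> [1,2,3::nat] ! a < [1,2,3] ! b) \<longleftrightarrow> f 0 < f 1 \<and> f 1 < f 2"
  by (auto simp: all_less_3_iff)

lemma order_isomorphic_321_iff:
  fixes f :: "nat \<Rightarrow> 'a::linorder"
  shows "(\<forall>a<3. \<forall>b<3. f a < f b \<longleftrightarrow> [3,2,1::nat] ! a < [3,2,1] ! b) \<longleftrightarrow> f 1 < f 0 \<and> f 2 < f 1"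
  by (auto simp: all_less_3_iff)

definition cyc_ascent :: "'a::linorder list \<Rightarrow> nat \<Rightarrow> bool" where
  "cyc_ascent \<sigma> j \<longleftrightarrow> \<sigma> ! j < \<sigma> ! ((j + 1) mod length \<sigma>)"

definition cyc_alternating :: "'a::linorder list \<Rightarrow> bool" where
  "cyc_alternating \<sigma> \<longleftrightarrow>
    (\<forall>j<length \<sigma>. cyc_ascent \<sigma> j \<noteq> cyc_ascent \<sigma> ((j + 1) mod length \<sigma>))"

lemma cyc_descent_iff:
  assumes "distinct \<sigma>" and "2 \<le> length \<sigma>" and "j < length \<sigma>"
  shows "\<sigma> ! ((j + 1) mod length \<sigma>) < \<sigma> ! j \<longleftrightarrow> \<not> cyc_ascent \<sigma> j"
proof -
  have "(j + 1) mod length \<sigma> \<noteq> j"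
    using assms(2,3) by (cases "j + 1 = length \<sigma>") auto
  moreover have "(j + 1) mod length \<sigma> < length \<sigma>"
    using assms(3) by (intro mod_less_divisor) linarith
  ultimately have "\<sigma> ! ((j + 1) mod length \<sigma>) \<noteq> \<sigma> ! j"
    using assms(1,3) by (simp add: nth_eq_iff_index_eq)
  then show ?thesis
    unfolding cyc_ascent_def by auto
qed

lemma cyc_contains_123_iff:
  assumes "3 \<le> length \<sigma>"
  shows "cyc_contains (cyc \<sigma>) [1,2,3] {0,1} \<longleftrightarrow>
    (\<exists>j<length \<sigma>. cyc_ascent \<sigma> j \<and> cyc_ascent \<sigma> ((j + 1) mod length \<sigma>))"
proof -
  let ?n = "length \<sigma>"
  have short: "length [1,2,3::nat] \<le> length \<sigma>" and len: "length [1,2,3::nat] = 3"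
    using assms by auto
  have "cyc_contains (cyc \<sigma>) [1,2,3] {0,1} \<longleftrightarrow>
    (\<exists>j<?n. \<sigma> ! ((j + 0) mod ?n) < \<sigma> ! ((j + 1) mod ?n) \<and>
             \<sigma> ! ((j + 1) mod ?n) < \<sigma> ! ((j + 2) mod ?n))"
    unfolding cyc_contains_consecutive[OF adjacent_positions_3 short] len order_isomorphic_123_iff
    by simp
  also have "\<dots> \<longleftrightarrow> (\<exists>j<?n. cyc_ascent \<sigma> j \<and> cyc_ascent \<sigma> ((j + 1) mod ?n))"
    unfolding cyc_ascent_def by (auto simp: mod_Suc_eq)
  finally show ?thesis .
qed

lemma cyc_contains_321_iff:
  assumes "distinct \<sigma>" and "3 \<le> length \<sigma>"
  shows "cyc_contains (cyc \<sigma>) [3,2,1] {0,1} \<longleftrightarrow>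
    (\<exists>j<length \<sigma>. \<not> cyc_ascent \<sigma> j \<and> \<not> cyc_ascent \<sigma> ((j + 1) mod length \<sigma>))"
proof -
  let ?n = "length \<sigma>"
  have short: "length [3,2,1::nat] \<le> length \<sigma>" and len: "length [3,2,1::nat] = 3"
    using assms by auto
  have "cyc_contains (cyc \<sigma>) [3,2,1] {0,1} \<longleftrightarrow>
    (\<exists>j<?n. \<sigma> ! ((j + 1) mod ?n) < \<sigma> ! ((j + 0) mod ?n) \<and>
             \<sigma> ! ((j + 2) mod ?n) < \<sigma> ! ((j + 1) mod ?n))"
    unfolding cyc_contains_consecutive[OF adjacent_positions_3 short] len order_isomorphic_321_iff
    by simp
  also have "\<dots> \<longleftrightarrow> (\<exists>j<?n. \<not> cyc_ascent \<sigma> j \<and> \<not> cyc_ascent \<sigma> ((j + 1) mod ?n))"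
  proof (rule ex_cong1, rule conj_cong[OF refl])
    fix j assume "j < ?n"
    moreover have "(j + 1) mod ?n < ?n"
      using \<open>j < ?n\<close> by (intro mod_less_divisor) linarith
    ultimately show "\<sigma> ! ((j + 1) mod ?n) < \<sigma> ! ((j + 0) mod ?n) \<and>
        \<sigma> ! ((j + 2) mod ?n) < \<sigma> ! ((j + 1) mod ?n) \<longleftrightarrow>
      \<not> cyc_ascent \<sigma> j \<and> \<not> cyc_ascent \<sigma> ((j + 1) mod ?n)"
      using cyc_descent_iff[OF assms(1) _ \<open>j < ?n\<close>] cyc_descent_iff[OF assms(1) _ \<open>(j + 1) mod ?n < ?n\<close>]
        assms(2) by (simp add: mod_Suc_eq)
  qed
  finally show ?thesis .
qed

lemma cyc_contains_length_le:
  assumes "{i. i + 1 < length \<pi>} \<subseteq> A" and "cyc_contains (cyc \<sigma>) \<pi> A"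
  shows "length \<pi> \<le> length \<sigma>"
  using assms unfolding cyc_contains_def cyc_def vinc_contains_consecutive[OF assms(1)] by auto

lemma avoids_123_321_iff_cyc_alternating:
  assumes "distinct \<sigma>" and "2 \<le> length \<sigma>"
  shows "\<not> cyc_contains (cyc \<sigma>) [1,2,3] {0,1} \<and> \<not> cyc_contains (cyc \<sigma>) [3,2,1] {0,1} \<longleftrightarrow>
    cyc_alternating \<sigma>"
proof (cases "length \<sigma> = 2")
  case True
  have "\<not> cyc_contains (cyc \<sigma>) [1,2,3] {0,1}" "\<not> cyc_contains (cyc \<sigma>) [3,2,1] {0,1}"
    using cyc_contains_length_le[OF adjacent_positions_3] True by fastforce+
  moreover have "cyc_ascent \<sigma> 1 \<longleftrightarrow> \<not> cyc_ascent \<sigma> 0"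
    using cyc_descent_iff[OF assms, of 0] True by (simp add: cyc_ascent_def)
  then have "cyc_alternating \<sigma>"
    unfolding cyc_alternating_def True by (auto simp: less_2_cases_iff)
  ultimately show ?thesis by simp
next
  case False
  then have "3 \<le> length \<sigma>" using assms(2) by simp
  then show ?thesis
    unfolding cyc_contains_123_iff[OF \<open>3 \<le> length \<sigma>\<close>]
      cyc_contains_321_iff[OF assms(1) \<open>3 \<le> length \<sigma>\<close>] cyc_alternating_def
    by blast
qed

lemma cyc_alternating_ascent_iff:
  assumes "cyc_alternating \<sigma>" and "j < length \<sigma>"
  shows "cyc_ascent \<sigma> j \<longleftrightarrow> (cyc_ascent \<sigma> 0 \<longleftrightarrow> even j)"
  using assms(2)
proof (induction j)
  case (Suc j)
  have "cyc_ascent \<sigma> j \<noteq> cyc_ascent \<sigma> ((j + 1) mod length \<sigma>)"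
    using assms(1) Suc.prems unfolding cyc_alternating_def by simp
  with Suc show ?case by auto
qed simp

lemma cyc_alternating_even_length:
  assumes "cyc_alternating \<sigma>"
  shows "even (length \<sigma>)"
proof (rule ccontr)
  assume odd_length: "odd (length \<sigma>)"
  define k where "k = length \<sigma> - 1"
  have k: "length \<sigma> = Suc k" and "even k"
    using odd_length odd_pos[OF odd_length] unfolding k_def by simp_all
  have "cyc_ascent \<sigma> k \<noteq> cyc_ascent \<sigma> ((k + 1) mod length \<sigma>)"
    using assms unfolding cyc_alternating_def k by blast
  moreover have "cyc_ascent \<sigma> k \<longleftrightarrow> cyc_ascent \<sigma> 0"
    using cyc_alternating_ascent_iff[OF assms, of k] k \<open>even k\<close> by simp
  ultimately show False
    using k by simp
qed

lemma cyc_alternatingI: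
  assumes "even (length \<sigma>)" and "\<forall>j<length \<sigma>. cyc_ascent \<sigma> j \<longleftrightarrow> even j"
  shows "cyc_alternating \<sigma>"
  unfolding cyc_alternating_def
proof (intro allI impI)
  fix j assume "j < length \<sigma>"
  show "cyc_ascent \<sigma> j \<noteq> cyc_ascent \<sigma> ((j + 1) mod length \<sigma>)"
  proof (cases "j + 1 = length \<sigma>")
    case True
    then have "odd j" and "0 < length \<sigma>"
      using assms(1) unfolding True[symmetric] by auto
    then show ?thesis
      using assms(2) \<open>j < length \<sigma>\<close> True by simp
  next
    case False
    then show ?thesis
      using assms(2) \<open>j < length \<sigma>\<close> by simp
  qed
qed

lemma up_down_iff_ascent_parity:
  assumes "distinct \<tau>"
  shows "up_down \<tau> \<longleftrightarrow> (\<forall>i. i + 1 < length \<tau> \<longrightarrow> (\<tau> ! i < \<tau> ! (i + 1) \<longleftrightarrow> even i))"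
proof -
  have "\<tau> ! i \<noteq> \<tau> ! (i + 1)" if "i + 1 < length \<tau>" for i
    using assms that by (simp add: nth_eq_iff_index_eq)
  then show ?thesis
    unfolding up_down_def by (metis linorder_neqE_nat not_less_iff_gr_or_eq)
qed

lemma cyc_alternating_iff_ascent_parity:
  assumes "even (length \<sigma>)" and "\<not> cyc_ascent \<sigma> (length \<sigma> - 1)"
  shows "cyc_alternating \<sigma> \<longleftrightarrow> (\<forall>j<length \<sigma>. cyc_ascent \<sigma> j \<longleftrightarrow> even j)"
proof
  assume alternating: "cyc_alternating \<sigma>"
  show "\<forall>j<length \<sigma>. cyc_ascent \<sigma> j \<longleftrightarrow> even j"
  proof (intro allI impI)
    fix j assume "j < length \<sigma>"
    then have "cyc_ascent \<sigma> 0"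
      using cyc_alternating_ascent_iff[OF alternating, of "length \<sigma> - 1"] assms by auto
    then show "cyc_ascent \<sigma> j \<longleftrightarrow> even j"
      using cyc_alternating_ascent_iff[OF alternating \<open>j < length \<sigma>\<close>] by simp
  qed
qed (rule cyc_alternatingI[OF assms(1)])

lemma cyc_ascent_snoc_greater:
  assumes "\<forall>x\<in>set \<tau>. x < m" and "\<tau> \<noteq> []" and "j \<le> length \<tau>"
  shows "cyc_ascent (\<tau> @ [m]) j \<longleftrightarrow>
    (if j + 1 < length \<tau> then \<tau> ! j < \<tau> ! (j + 1) else j + 1 = length \<tau>)"
proof -
  have "\<tau> ! j < m" if "j < length \<tau>"
    using assms(1) that by simp
  moreover have "\<tau> ! 0 < m"
    using assms(1,2) by simp
  ultimately show ?thesis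
    using assms(3) unfolding cyc_ascent_def by (auto simp: nth_append)
qed

lemma cyc_alternating_snoc_greater_iff:
  assumes "distinct \<tau>" and "\<forall>x\<in>set \<tau>. x < m" and "odd (length \<tau>)"
  shows "cyc_alternating (\<tau> @ [m]) \<longleftrightarrow> up_down \<tau>"
proof -
  let ?k = "length \<tau>"
  have "\<tau> \<noteq> []"
    using assms(3) by auto
  note ascent = cyc_ascent_snoc_greater[OF assms(2) this]
  have "cyc_alternating (\<tau> @ [m]) \<longleftrightarrow> (\<forall>j<Suc ?k. cyc_ascent (\<tau> @ [m]) j \<longleftrightarrow> even j)"
    using cyc_alternating_iff_ascent_parity[of "\<tau> @ [m]"] ascent[of ?k] assms(3) by simp
  also have "\<dots> \<longleftrightarrow> (\<forall>j. j + 1 < ?k \<longrightarrow> (\<tau> ! j < \<tau> ! (j + 1) \<longleftrightarrow> even j))"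
  proof -
    have "j < Suc ?k \<longleftrightarrow> j + 1 < ?k \<or> j = ?k - 1 \<or> j = ?k" for j
      using \<open>\<tau> \<noteq> []\<close> by auto
    moreover have "even (?k - 1)"
      using assms(3) \<open>\<tau> \<noteq> []\<close> by simp
    ultimately show ?thesis
      using ascent assms(3) by fastforce
  qed
  also have "\<dots> \<longleftrightarrow> up_down \<tau>"
    using up_down_iff_ascent_parity[OF assms(1)] by simp
  finally show ?thesis .
qed

lemma perms_length: "\<sigma> \<in> perms n \<Longrightarrow> length \<sigma> = n"
  unfolding perms_def by (auto simp flip: distinct_card)

lemma rotate_in_perms: "\<sigma> \<in> perms n \<Longrightarrow> rotate k \<sigma> \<in> perms n"
  unfolding perms_def by simp

lemma snoc_in_perms_Suc_iff: "\<tau> @ [Suc m] \<in> perms (Suc m) \<longleftrightarrow> \<tau> \<in> perms m"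
proof
  assume "\<tau> @ [Suc m] \<in> perms (Suc m)"
  then have "distinct \<tau>" and "Suc m \<notin> set \<tau>" and "insert (Suc m) (set \<tau>) = {1..Suc m}"
    unfolding perms_def by auto
  then have "set \<tau> = {1..Suc m} - {Suc m}"
    by blast
  also have "\<dots> = {1..m}"
    by auto
  finally have "set \<tau> = {1..m}" .
  then show "\<tau> \<in> perms m"
    unfolding perms_def using \<open>distinct \<tau>\<close> by simp
next
  assume "\<tau> \<in> perms m"
  then show "\<tau> @ [Suc m] \<in> perms (Suc m)"
    unfolding perms_def by (auto simp: atLeastAtMostSuc_conv)
qed

lemma perms_1: "perms 1 = {[1]}"
proof
  show "perms 1 \<subseteq> {[1]}"
  proof
    fix xs assume xs: "xs \<in> perms 1"
    then obtain a where "xs = [a]"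
      using perms_length[OF xs] by (metis One_nat_def length_0_conv length_Suc_conv)
    with xs show "xs \<in> {[1]}"
      unfolding perms_def by simp
  qed
qed (simp add: perms_def)

lemma cyc_eq_range_rotate:
  assumes "\<sigma> \<noteq> []"
  shows "cyc \<sigma> = range (\<lambda>k. rotate k \<sigma>)"
proof -
  have "rotate k \<sigma> \<in> cyc \<sigma>" for k
    using assms unfolding cyc_def by (auto intro!: exI[of _ "k mod length \<sigma>"] rotate_conv_mod)
  then show ?thesis
    unfolding cyc_def by auto
qed

lemma cyc_rotate: "cyc (rotate m \<sigma>) = cyc \<sigma>"
proof (cases "\<sigma> = []")
  case False
  let ?n = "length \<sigma>"
  have "rotate k \<sigma> = rotate (k + (?n - 1) * m) (rotate m \<sigma>)" for k
  proof -
    have "rotate k \<sigma> = rotate (k + ?n * m) \<sigma>"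
      by (metis rotate_conv_mod mod_mult_self2)
    also have "k + ?n * m = k + (?n - 1) * m + m"
      using False by (cases ?n) auto
    finally show ?thesis
      by (simp add: rotate_rotate)
  qed
  then show ?thesis
    using False by (auto simp: cyc_eq_range_rotate rotate_rotate)
qed simp

lemma rotate_to_snoc:
  assumes "x \<in> set xs"
  obtains k ys where "rotate k xs = ys @ [x]"
proof -
  obtain as bs where "xs = as @ x # bs"
    using split_list[OF assms] by blast
  then have "rotate (length (as @ [x])) xs = bs @ as @ [x]"
    using rotate_append[of "as @ [x]" bs] by simp
  then show thesis
    using that by (metis append_assoc)
qed

lemma inj_on_cyc_snoc: "inj_on (\<lambda>xs. cyc (xs @ [m])) {xs. m \<notin> set xs}"
proof (rule inj_onI)
  fix xs ys
  assume "xs \<in> {xs. m \<notin> set xs}" and "ys \<in> {xs. m \<notin> set xs}"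
    and cyc_eq: "cyc (xs @ [m]) = cyc (ys @ [m])"
  then have "m \<notin> set ys" by simp
  have "xs @ [m] \<in> cyc (xs @ [m])"
    unfolding cyc_def by (auto intro: exI[of _ 0])
  then have "xs @ [m] \<in> cyc (ys @ [m])"
    using cyc_eq by simp
  then obtain k where "k < length (ys @ [m])" and rot: "xs @ [m] = rotate k (ys @ [m])"
    unfolding cyc_def by blast
  have "k = 0"
  proof (rule ccontr)
    assume "k \<noteq> 0"
    then have "take k (ys @ [m]) = take k ys" and "take k ys \<noteq> []"
      using \<open>k < length (ys @ [m])\<close> by auto
    then have "last (xs @ [m]) = last (take k ys)"
      using rot \<open>k < length (ys @ [m])\<close> by (simp add: rotate_drop_take)
    then have "m \<in> set ys"
      using \<open>take k ys \<noteq> []\<close> by (metis last_in_set last_snoc in_set_takeD)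
    with \<open>m \<notin> set ys\<close> show False ..
  qed
  then show "xs = ys"
    using rot by simp
qed

lemma cyc_in_Av_123_321_iff:
  assumes "\<sigma> \<in> perms n" and "2 \<le> n"
  shows "cyc \<sigma> \<in> Av_123_321 n \<longleftrightarrow> cyc_alternating \<sigma>"
proof -
  have "distinct \<sigma>" and "2 \<le> length \<sigma>"
    using assms perms_length unfolding perms_def by auto
  then show ?thesis
    using assms(1) avoids_123_321_iff_cyc_alternating
    unfolding Av_123_321_def cyc_perms_def by auto
qed

lemma Av_123_321_odd:
  assumes "odd n" and "2 \<le> n"
  shows "Av_123_321 n = {}"
proof -
  have "cyc \<sigma> \<notin> Av_123_321 n" if "\<sigma> \<in> perms n" for \<sigma>
    using cyc_in_Av_123_321_iff[OF that assms(2)] cyc_alternating_even_length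
      perms_length[OF that] assms(1) by blast
  then show ?thesis
    unfolding Av_123_321_def cyc_perms_def by blast
qed

lemma cyc_snoc_in_Av_123_321_iff:
  assumes "odd m" and "\<tau> \<in> perms m"
  shows "cyc (\<tau> @ [Suc m]) \<in> Av_123_321 (Suc m) \<longleftrightarrow> up_down \<tau>"
proof -
  have "2 \<le> Suc m"
    using assms(1) by (cases m) auto
  moreover have "distinct \<tau>" and "\<forall>x\<in>set \<tau>. x < Suc m" and "odd (length \<tau>)"
    using assms perms_length[OF assms(2)] unfolding perms_def by auto
  ultimately show ?thesis
    using cyc_in_Av_123_321_iff assms(2) snoc_in_perms_Suc_iff
      cyc_alternating_snoc_greater_iff by blast
qed

lemma Av_123_321_even:
  assumes "odd m"
  shows "Av_123_321 (Suc m) = (\<lambda>\<tau>. cyc (\<tau> @ [Suc m])) ` {\<tau> \<in> perms m. up_down \<tau>}"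
proof
  show "Av_123_321 (Suc m) \<subseteq> (\<lambda>\<tau>. cyc (\<tau> @ [Suc m])) ` {\<tau> \<in> perms m. up_down \<tau>}"
  proof
    fix C assume C: "C \<in> Av_123_321 (Suc m)"
    then obtain \<sigma> where \<sigma>: "\<sigma> \<in> perms (Suc m)" and "C = cyc \<sigma>"
      unfolding Av_123_321_def cyc_perms_def by blast
    moreover have "Suc m \<in> set \<sigma>"
      using \<sigma> unfolding perms_def by simp
    ultimately obtain k \<tau> where "rotate k \<sigma> = \<tau> @ [Suc m]"
      by (meson rotate_to_snoc)
    then have "\<tau> \<in> perms m" and "C = cyc (\<tau> @ [Suc m])"
      using rotate_in_perms[OF \<sigma>, of k] snoc_in_perms_Suc_iff \<open>C = cyc \<sigma>\<close> cyc_rotate by metis+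
    with C show "C \<in> (\<lambda>\<tau>. cyc (\<tau> @ [Suc m])) ` {\<tau> \<in> perms m. up_down \<tau>}"
      using cyc_snoc_in_Av_123_321_iff[OF assms] by blast
  qed
next
  show "(\<lambda>\<tau>. cyc (\<tau> @ [Suc m])) ` {\<tau> \<in> perms m. up_down \<tau>} \<subseteq> Av_123_321 (Suc m)"
    using cyc_snoc_in_Av_123_321_iff[OF assms] by blast
qed

lemma card_Av_123_321_even:
  assumes "odd m"
  shows "card (Av_123_321 (Suc m)) = U m"
proof -
  have "inj_on (\<lambda>\<tau>. cyc (\<tau> @ [Suc m])) {\<tau> \<in> perms m. up_down \<tau>}"
    by (rule inj_on_subset[OF inj_on_cyc_snoc]) (auto simp: perms_def)
  then show ?thesis
    unfolding Av_123_321_even[OF assms] U_def by (rule card_image)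
qed

lemma Av_123_321_1: "Av_123_321 1 = {cyc [1]}"
proof -
  have "\<not> cyc_contains (cyc [1]) [a, b, c] {0,1}" for a b c
    using cyc_contains_length_le[OF adjacent_positions_3] by fastforce
  then show ?thesis
    unfolding Av_123_321_def cyc_perms_def perms_1 by auto
qed

theorem proposition4p2:
  fixes n :: nat
  assumes "n \<ge> 1"
  shows "card (Av_123_321 n) =
           (if n = 1 then 1 else if odd n then 0 else U (n - 1))"
proof -
  consider "n = 1" | "odd n" "2 \<le> n" | "even n" "2 \<le> n"
    using assms by linarith
  then show ?thesis
  proof cases
    case 1
    then show ?thesis
      unfolding \<open>n = 1\<close> Av_123_321_1 by simp
  next
    case 2
    then show ?thesis by (simp add: Av_123_321_odd)
  next
    case 3
    then have "n = Suc (n - 1)" and "odd (n - 1)"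
      by auto
    then show ?thesis
      using card_Av_123_321_even[of "n - 1"] 3 by simp
  qed
qed

end
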